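(* Let $r\ge2$ and $n\ge 2r$. An $r$-cgh $H\subseteq\binom{\Omega_n}{r}$ is $M_1^{(r)}$-saturated if and only if $H=H_n^{(r)}(C)$ for some $\ell\ge1$ and some $r$-valid tuple $C=(w_1,\dots,w_{2\ell+1})$.
   Context: $\Omega_n=\{v_0,\dots,v_{n-1}\}$ with cyclic order $v_0<\dots<v_{n-1}<v_0$ (indices mod $n$). A cgh is a family of subsets (edges) of $\Omega_n$; an $r$-cgh has all edges of size $r$. $M_1^{(r)}$ is the $r$-cgh with edges $\{v_0,\dots,v_{r-1}\}$ and $\{v_r,\dots,v_{2r-1}\}$ on $\Omega_{2r}$. $H$ contains a copy of $M_1^{(r)}$ iff it has two edges $h_1,h_2$ and vertices $u\neq u'$ with $h_1\subseteq[u,u']$ and $h_2\cap[u,u']=\emptyset$ (two edges separated by a chord). $H$ is $M_1^{(r)}$-saturated if it contains no such pair but adding any $e\in\binom{\Omega_n}{r}\setminus H$ creates one. For distinct vertices $u,w$, $(u,w)$ is the set of vertices strictly between $u$ and $w$ moving clockwise from $u$ to $w$, and $[u,w]=(u,w)\cup\{u,w\}$. A tuple $C=(w_1,\dots,w_{2\ell+1})$ of distinct vertices is semi-valid if $w_1<w_3<\dots<w_{2\ell+1}<w_2<w_4<\dots<w_{2\ell}<w_1$ in clockwise cyclic order, and $r$-valid if moreover $|[w_i,w_{i-1}]|\ge r$ for all $i$ (indices mod $2\ell+1$). $H_n^{(r)}(C)=\{e\in\binom{\Omega_n}{r}: e\cap[w_i,w_{i-1}]\neq\emptyset\ \forall i\in\{1,\dots,2\ell+1\}\}$,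 indices mod $2\ell+1$. *)

theory Defs
  imports Main
begin

text \<open>Vertices of Omega_n are 0..n-1 (v_i is i), clockwise order = increasing index mod n.\<close>

definition verts :: "nat \<Rightarrow> nat set" where
  "verts n = {..<n}"

definition cint :: "nat \<Rightarrow> nat \<Rightarrow> nat \<Rightarrow> nat set" where
  "cint n u w = {(u + k) mod n | k. k \<le> (w + n - u) mod n}"

definition rsets :: "nat \<Rightarrow> nat \<Rightarrow> nat set set" where
  "rsets n r = {e. e \<subseteq> verts n \<and> card e = r}"

text \<open>H contains a copy of M_1^(r): two edges separated by a chord.\<close>
definition contains_M1 :: "nat \<Rightarrow> nat set set \<Rightarrow> bool" where
  "contains_M1 n H \<longleftrightarrow> (\<exists>h1\<in>H. \<exists>h2\<in>H. \<exists>u\<in>verts n. \<exists>u'\<in>verts n.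
      u \<noteq> u' \<and> h1 \<subseteq> cint n u u' \<and> h2 \<inter> cint n u u' = {})"

definition M1_saturated :: "nat \<Rightarrow> nat \<Rightarrow> nat set set \<Rightarrow> bool" where
  "M1_saturated n r H \<longleftrightarrow> H \<subseteq> rsets n r \<and> \<not> contains_M1 n H \<and>
     (\<forall>e \<in> rsets n r - H. contains_M1 n (insert e H))"

definition cyc_ordered :: "nat \<Rightarrow> nat list \<Rightarrow> bool" where
  "cyc_ordered n s \<longleftrightarrow> distinct s \<and> set s \<subseteq> verts n \<and>
     sorted_wrt (<) (map (\<lambda>x. (x + n - hd s) mod n) s)"

text \<open>Tuples C = (w_1,...,w_{2l+1}) are lists, with w_{j+1} = C!j (0-based).
  The index predecessor of position i (mod length) is (i + length C - 1) mod length C.\<close>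
definition semi_valid :: "nat \<Rightarrow> nat list \<Rightarrow> bool" where
  "semi_valid n C \<longleftrightarrow> odd (length C) \<and>
     cyc_ordered n (map (\<lambda>j. C ! (2*j)) [0..<(length C + 1) div 2] @
                    map (\<lambda>j. C ! (2*j+1)) [0..<length C div 2])"

definition r_valid :: "nat \<Rightarrow> nat \<Rightarrow> nat list \<Rightarrow> bool" where
  "r_valid n r C \<longleftrightarrow> semi_valid n C \<and>
     (\<forall>i<length C. card (cint n (C ! i) (C ! ((i + length C - 1) mod length C))) \<ge> r)"

definition Hc :: "nat \<Rightarrow> nat \<Rightarrow> nat list \<Rightarrow> nat set set" where
  "Hc n r C = {e \<in> rsets n r. \<forall>i<length C.
      e \<inter> cint n (C ! i) (C ! ((i + length C - 1) mod length C)) \<noteq> {}}"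

end

theory Submission
  imports Defs
begin

text \<open>Call \<open>2 l + 1\<close> vertices \<open>p\<^sub>0, \<dots>, p\<^sub>2\<^sub>l\<close> in clockwise order a frame, and the arcs
  \<open>[p\<^sub>q, p\<^sub>q\<^sub>+\<^sub>l]\<close> (indices modulo \<open>2 l + 1\<close>) its frame arcs; \<open>H\<^sub>n\<^sup>(\<^sup>r\<^sup>)(C)\<close> consists of
  the \<open>r\<close>-sets meeting all frame arcs of the frame formed by \<open>C\<close>.

  Sufficiency: if an arc contains at most \<open>l\<close> frame points then some frame arc misses it, so an
  edge inside an arc forces more than \<open>l\<close> frame points into that arc, and two edges separated by a
  chord would need more than \<open>2 l + 1\<close> frame points. A missing \<open>r\<close>-set avoids some frame arc
  \<open>[p\<^sub>q, p\<^sub>q\<^sub>+\<^sub>l]\<close>, and an \<open>r\<close>-subset of that arc containing both endpoints is an edge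
  separated from it by the chord \<open>p\<^sub>q p\<^sub>q\<^sub>+\<^sub>l\<close>.

  Necessity: for saturated \<open>H\<close> let \<open>arc_end x\<close> be the end of the shortest clockwise arc from
  \<open>x\<close> containing an edge. This map is monotone, so on one of its cycles, listed clockwise, it
  shifts every point by the same number \<open>c\<close> of positions. With \<open>m\<close> points on the cycle,
  \<open>m \<ge> 2 c + 2\<close> would give two disjoint minimal arcs and \<open>m \<le> 2 c\<close> an edge in an arc shorter
  than a minimal one; hence \<open>m = 2 c + 1\<close>, and \<open>H\<close> is the cgh of this frame.\<close>

section \<open>Clockwise distance and arcs\<close>

definition cdist :: "nat \<Rightarrow> nat \<Rightarrow> nat \<Rightarrow> nat" where
  "cdist n u x = (if u \<le> x then x - u else x + n - u)"

lemma cdist_eq_mod: "u < n \<Longrightarrow> x < n \<Longrightarrow> (x + n - u) mod n = cdist n u x"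
  by (auto simp: cdist_def le_mod_geq)

lemma cdist_less: "u < n \<Longrightarrow> x < n \<Longrightarrow> cdist n u x < n"
  unfolding cdist_def by auto

lemma cdist_self [simp]: "cdist n u u = 0"
  by (simp add: cdist_def)

lemma cdist_rebase:
  "b < n \<Longrightarrow> u < n \<Longrightarrow> x < n \<Longrightarrow> cdist n u x = cdist n (cdist n b u) (cdist n b x)"
  unfolding cdist_def by auto

lemma add_mod_if:
  "(a::nat) < m \<Longrightarrow> b < m \<Longrightarrow> (a + b) mod m = (if a + b < m then a + b else a + b - m)"
  by (simp add: mod_if)

lemma cdist_add_mod: "u < n \<Longrightarrow> k < n \<Longrightarrow> cdist n u ((u + k) mod n) = k"
  by (auto simp: add_mod_if cdist_def)

lemma add_cdist_mod: "u < n \<Longrightarrow> x < n \<Longrightarrow> (u + cdist n u x) mod n = x"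
  unfolding cdist_def by auto

lemma cdist_inj: "u < n \<Longrightarrow> a < n \<Longrightarrow> b < n \<Longrightarrow> cdist n u a = cdist n u b \<Longrightarrow> a = b"
  using add_cdist_mod by metis

lemma cdist_eq_0_iff: "u < n \<Longrightarrow> x < n \<Longrightarrow> cdist n u x = 0 \<longleftrightarrow> x = u"
  unfolding cdist_def by auto

lemma cdist_Suc_mod:
  assumes "i < m" "s < m" "s \<noteq> i"
  shows "cdist m ((i+1) mod m) s = cdist m i s - 1"
proof (cases "i + 1 < m")
  case True
  then show ?thesis using assms by (simp add: cdist_def)
next
  case False
  then have "i + 1 = m" using assms by simp
  then show ?thesis using assms by (simp add: cdist_def)
qed

lemma cdist_le_cdist_iff:
  "a < n \<Longrightarrow> c < n \<Longrightarrow> t < n \<Longrightarrow>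
   cdist n a t \<le> cdist n a c \<longleftrightarrow> (if a \<le> c then a \<le> t \<and> t \<le> c else a \<le> t \<or> t \<le> c)"
  unfolding cdist_def by auto

text \<open>Comparing clockwise distances from \<open>a\<close> only depends on the relative order of \<open>a, b, c\<close>;
  this transfers such comparisons from frame points to their indices.\<close>

lemma cdist_le_iff_transfer:
  assumes "a < n" "b < n" "c < n" "(a \<le> b) = (i \<le> j)" "(a \<le> c) = (i \<le> k)" "(b \<le> c) = (j \<le> k)"
    "i < m" "j < m" "k < m"
  shows "cdist n a b \<le> cdist n a c \<longleftrightarrow> cdist m i j \<le> cdist m i k"
  using assms unfolding cdist_def by (cases "i \<le> j"; cases "i \<le> k") (simp; arith)+

lemma cint_conv_image:
  "u < n \<Longrightarrow> w < n \<Longrightarrow> cint n u w = (\<lambda>k. (u + k) mod n) ` {..cdist n u w}"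
  unfolding cint_def using cdist_eq_mod by auto

lemma mem_cint_iff:
  assumes u: "u < n" and w: "w < n"
  shows "x \<in> cint n u w \<longleftrightarrow> x < n \<and> cdist n u x \<le> cdist n u w"
proof
  assume "x \<in> cint n u w"
  then obtain k where k: "x = (u + k) mod n" "k \<le> cdist n u w"
    using cint_conv_image[OF u w] by auto
  moreover have "k < n" using k cdist_less[OF u w] by linarith
  ultimately show "x < n \<and> cdist n u x \<le> cdist n u w"
    using u cdist_add_mod by simp
next
  assume "x < n \<and> cdist n u x \<le> cdist n u w"
  then show "x \<in> cint n u w"
    using cint_conv_image[OF u w] add_cdist_mod[OF u] by (metis atMost_iff image_eqI)
qed

lemma card_cint:
  assumes u: "u < n" and w: "w < n"
  shows "card (cint n u w) = cdist n u w + 1"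
proof -
  have "inj_on (\<lambda>k. (u + k) mod n) {..cdist n u w}"
    using cdist_less[OF u w] cdist_add_mod[OF u] by (intro inj_onI) (metis atMost_iff le_less_trans)
  then show ?thesis by (simp add: cint_conv_image[OF u w] card_image)
qed

lemma finite_cint: "finite (cint n u w)"
  unfolding cint_def by simp

lemma cint_subset_verts: "0 < n \<Longrightarrow> cint n u w \<subseteq> verts n"
  unfolding cint_def verts_def by auto

lemma mem_cint_iff_rebase:
  assumes b: "b < n" and v: "v < n" and v': "v' < n"
  shows "x \<in> cint n v v' \<longleftrightarrow> x < n \<and>
    (if cdist n b v \<le> cdist n b v' then cdist n b v \<le> cdist n b x \<and> cdist n b x \<le> cdist n b v'
     else cdist n b v \<le> cdist n b x \<or> cdist n b x \<le> cdist n b v')"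
proof (cases "x < n")
  case True
  have "x \<in> cint n v v' \<longleftrightarrow> cdist n (cdist n b v) (cdist n b x) \<le> cdist n (cdist n b v) (cdist n b v')"
    using mem_cint_iff[OF v v'] cdist_rebase[OF b v] True v' by simp
  then show ?thesis
    using cdist_le_cdist_iff[OF cdist_less[OF b v] cdist_less[OF b v'] cdist_less[OF b True]] True
    by simp
qed (use mem_cint_iff[OF v v'] in auto)

lemma compl_cint:
  assumes u: "u < n" and w: "w < n" and short: "cdist n u w + 1 < n"
  shows "{x. x < n \<and> x \<notin> cint n u w} = cint n ((w+1) mod n) ((u+n-1) mod n)"
proof -
  have n_pos: "0 < n" using u by simp
  have "(w+1) mod n = (u + (cdist n u w + 1)) mod n"
    using add_cdist_mod[OF u w] mod_Suc_eq[of "u + cdist n u w" n] by simp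
  then have w1: "cdist n u ((w+1) mod n) = cdist n u w + 1" using cdist_add_mod[OF u short] by simp
  have "(u+n-1) mod n = (u + (n-1)) mod n" using n_pos by simp
  then have u2: "cdist n u ((u+n-1) mod n) = n - 1" using cdist_add_mod[OF u, of "n-1"] n_pos by simp
  have w1n: "(w+1) mod n < n" "(u+n-1) mod n < n" using n_pos by auto
  show ?thesis
  proof (rule set_eqI)
    fix x
    show "x \<in> {x. x < n \<and> x \<notin> cint n u w} \<longleftrightarrow> x \<in> cint n ((w+1) mod n) ((u+n-1) mod n)"
    proof (cases "x < n")
      case True
      have "cdist n u x < n" using cdist_less u True by simp
      then show ?thesis
        using mem_cint_iff_rebase[OF u w1n, of x] w1 u2 mem_cint_iff[OF u w, of x] True short by auto
    next
      case False
      then show ?thesis using mem_cint_iff w1n by auto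
    qed
  qed
qed

lemma cdist_Suc_less_if_outside:
  "u < n \<Longrightarrow> u' < n \<Longrightarrow> x < n \<Longrightarrow> x \<notin> cint n u u' \<Longrightarrow> cdist n u u' + 1 < n"
  using mem_cint_iff cdist_less by (metis Suc_eq_plus1 Suc_lessI leI less_imp_le_nat less_le_trans)

lemma ex_cint_cover_of_outside:
  assumes u: "u < n" "u' < n" and h: "h \<subseteq> verts n" "h \<noteq> {}" "h \<inter> cint n u u' = {}"
  obtains w w' where "w < n" "w' < n" "h \<subseteq> cint n w w'" "cint n w w' \<inter> cint n u u' = {}"
proof -
  obtain x where x: "x \<in> h" using h(2) by auto
  then have "x < n" "x \<notin> cint n u u'" using h(1,3) verts_def by auto
  then have short: "cdist n u u' + 1 < n" using cdist_Suc_less_if_outside u by blast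
  let ?w = "(u'+1) mod n" and ?w' = "(u+n-1) mod n"
  have "{x. x < n \<and> x \<notin> cint n u u'} = cint n ?w ?w'" using compl_cint[OF u short] .
  moreover have "?w < n" "?w' < n" using u by auto
  ultimately show ?thesis using that h(1,3) unfolding verts_def by blast
qed

lemma ex_rset_in_cint:
  assumes "u < n" "w < n" "u \<noteq> w" "2 \<le> r" "r \<le> card (cint n u w)"
  shows "\<exists>E. E \<subseteq> cint n u w \<and> card E = r \<and> u \<in> E \<and> w \<in> E"
proof -
  have uw: "u \<in> cint n u w" "w \<in> cint n u w" using mem_cint_iff assms by auto
  have "card (cint n u w - {u,w}) = card (cint n u w) - 2"
    using uw finite_cint assms(3) by (simp add: card_Diff_subset)
  then have "r - 2 \<le> card (cint n u w - {u,w})" using assms by simp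
  then obtain F where F: "F \<subseteq> cint n u w - {u,w}" "card F = r - 2" "finite F"
    by (rule obtain_subset_with_card_n)
  have "card (F \<union> {u,w}) = r" using F assms(3,4) by (subst card_Un_disjoint) auto
  then show ?thesis using F uw by (intro exI[of _ "F \<union> {u,w}"]) auto
qed

section \<open>Frames\<close>

abbreviation frame_coord :: "nat \<Rightarrow> nat list \<Rightarrow> nat \<Rightarrow> nat" where
  "frame_coord n ps q \<equiv> cdist n (ps!0) (ps!q)"

definition cyc_frame :: "nat \<Rightarrow> nat list \<Rightarrow> bool" where
  "cyc_frame n ps \<longleftrightarrow> ps \<noteq> [] \<and> (\<forall>q<length ps. ps!q < n) \<and>
     (\<forall>i j. i < j \<longrightarrow> j < length ps \<longrightarrow> frame_coord n ps i < frame_coord n ps j)"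

lemma cyc_frame_nth_less: "cyc_frame n ps \<Longrightarrow> q < length ps \<Longrightarrow> ps!q < n"
  unfolding cyc_frame_def by auto

lemma cyc_frame_less_iff: "cyc_frame n ps \<Longrightarrow> i < length ps \<Longrightarrow> j < length ps \<Longrightarrow>
  frame_coord n ps i < frame_coord n ps j \<longleftrightarrow> i < j"
  unfolding cyc_frame_def by (metis less_asym nat_neq_iff)

lemma cyc_frame_le_iff: "cyc_frame n ps \<Longrightarrow> i < length ps \<Longrightarrow> j < length ps \<Longrightarrow>
  frame_coord n ps i \<le> frame_coord n ps j \<longleftrightarrow> i \<le> j"
  using cyc_frame_less_iff by (metis not_less)

lemma cyc_frame_cdist_less: "cyc_frame n ps \<Longrightarrow> i < length ps \<Longrightarrow> frame_coord n ps i < n"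
  using cyc_frame_nth_less cdist_less by (metis length_greater_0_conv cyc_frame_def)

lemma cyc_frame_cdist_rebase: "cyc_frame n ps \<Longrightarrow> i < length ps \<Longrightarrow> j < length ps \<Longrightarrow>
  cdist n (ps!i) (ps!j) = cdist n (frame_coord n ps i) (frame_coord n ps j)"
  using cyc_frame_nth_less cdist_rebase by (metis length_greater_0_conv cyc_frame_def)

lemma cyc_frame_cdist_le_iff:
  assumes f: "cyc_frame n ps" and i: "i < length ps" and j: "j < length ps" and k: "k < length ps"
  shows "cdist n (ps!i) (ps!j) \<le> cdist n (ps!i) (ps!k) \<longleftrightarrow> cdist (length ps) i j \<le> cdist (length ps) i k"
proof -
  define D where "D q = frame_coord n ps q" for q
  have m: "\<And>a b. a < length ps \<Longrightarrow> b < length ps \<Longrightarrow> D a \<le> D b \<longleftrightarrow> a \<le> b"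
    using cyc_frame_le_iff[OF f] D_def by simp
  have ms: "\<And>a b. a < length ps \<Longrightarrow> b < length ps \<Longrightarrow> D a < D b \<longleftrightarrow> a < b"
    using cyc_frame_less_iff[OF f] D_def by simp
  have lt: "D i < n" "D j < n" "D k < n" using cyc_frame_cdist_less[OF f] i j k D_def by auto
  have "cdist n (ps!i) (ps!j) \<le> cdist n (ps!i) (ps!k) \<longleftrightarrow> cdist n (D i) (D j) \<le> cdist n (D i) (D k)"
    using cyc_frame_cdist_rebase[OF f] i j k D_def by simp
  also have "\<dots> \<longleftrightarrow> cdist (length ps) i j \<le> cdist (length ps) i k"
    using cdist_le_iff_transfer[OF lt _ _ _ i j k] m[OF i j] m[OF i k] m[OF j k] by blast
  finally show ?thesis .
qed

lemma cyc_frame_cdist_less_iff: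
  assumes f: "cyc_frame n ps" and i: "i < length ps" and j: "j < length ps" and k: "k < length ps"
  shows "cdist n (ps!i) (ps!j) < cdist n (ps!i) (ps!k) \<longleftrightarrow> cdist (length ps) i j < cdist (length ps) i k"
  using cyc_frame_cdist_le_iff[OF f i k j] by (meson not_less)

lemma cyc_frame_mem_cint_iff:
  assumes f: "cyc_frame n ps" and i: "i < length ps" and j: "j < length ps" and k: "k < length ps"
  shows "ps!j \<in> cint n (ps!i) (ps!k) \<longleftrightarrow> cdist (length ps) i j \<le> cdist (length ps) i k"
  using cyc_frame_cdist_le_iff[OF assms] mem_cint_iff cyc_frame_nth_less[OF f] i j k by metis

lemma cyc_frame_nth_inj: "cyc_frame n ps \<Longrightarrow> i < length ps \<Longrightarrow> j < length ps \<Longrightarrow> ps!i = ps!j \<Longrightarrow> i = j"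
  using cyc_frame_less_iff by (metis less_irrefl nat_neq_iff)

lemma cyc_frame_rotate:
  assumes f: "cyc_frame n ps" and j: "j < length ps"
  shows "cyc_frame n (rotate j ps)" "\<And>q. q < length ps \<Longrightarrow> rotate j ps ! q = ps ! ((q + j) mod length ps)"
proof -
  show nr: "\<And>q. q < length ps \<Longrightarrow> rotate j ps ! q = ps ! ((q + j) mod length ps)"
    by (simp add: nth_rotate add.commute)
  have r0: "rotate j ps ! 0 = ps ! j" using nr[of 0] j by (cases ps) auto
  have lp: "0 < length ps" using j by linarith
  show "cyc_frame n (rotate j ps)"
    unfolding cyc_frame_def
  proof (intro conjI allI impI)
    show "rotate j ps \<noteq> []" using f cyc_frame_def by auto
    fix q assume "q < length (rotate j ps)"
    then have "(q + j) mod length ps < length ps" "q < length ps" using lp by auto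
    then show "rotate j ps ! q < n" using nr cyc_frame_nth_less[OF f] by metis
  next
    fix a b assume ab: "a < b" "b < length (rotate j ps)"
    then have ab': "a < length ps" "b < length ps" by auto
    have "cdist (length ps) j ((a + j) mod length ps) < cdist (length ps) j ((b + j) mod length ps)"
      using cdist_add_mod[OF j, of a] cdist_add_mod[OF j, of b] ab ab' by (simp add: add.commute)
    then have "cdist n (ps!j) (ps!((a + j) mod length ps)) < cdist n (ps!j) (ps!((b + j) mod length ps))"
      using cyc_frame_cdist_less_iff[OF f j] lp by simp
    then show "cdist n (rotate j ps ! 0) (rotate j ps ! a) < cdist n (rotate j ps ! 0) (rotate j ps ! b)"
      using nr ab' r0 by simp
  qed
qed

lemma ex_threshold:
  fixes m :: nat
  assumes "\<And>i j. i \<le> j \<Longrightarrow> j < m \<Longrightarrow> P j \<Longrightarrow> P i"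
  shows "\<exists>k\<le>m. \<forall>q<m. P q \<longleftrightarrow> q < k"
proof (cases "\<forall>q<m. P q")
  case True
  then show ?thesis by (intro exI[of _ m]) auto
next
  case False
  define k where "k = (LEAST q. q < m \<and> \<not> P q)"
  have k1: "k < m \<and> \<not> P k" using False LeastI_ex[of "\<lambda>q. q < m \<and> \<not> P q"] k_def by auto
  have k2: "\<And>q. q < k \<Longrightarrow> P q" using k1 not_less_Least k_def
    by (metis order.strict_trans)
  have "\<forall>q<m. P q \<longleftrightarrow> q < k"
  proof (intro allI impI)
    fix q assume "q < m"
    show "P q \<longleftrightarrow> q < k"
    proof
      assume "P q" then show "q < k" using assms[of k q] k1 \<open>q < m\<close> by (meson not_less)
    qed (rule k2)
  qed
  then show ?thesis using k1 by (intro exI[of _ k]) auto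
qed

lemma cyc_frame_threshold_less:
  assumes "cyc_frame n ps"
  obtains k where "k \<le> length ps" "\<And>q. q < length ps \<Longrightarrow> frame_coord n ps q < t \<longleftrightarrow> q < k"
proof -
  have "\<And>i j. i \<le> j \<Longrightarrow> j < length ps \<Longrightarrow> frame_coord n ps j < t \<Longrightarrow> frame_coord n ps i < t"
    using cyc_frame_le_iff[OF assms] by (meson le_less_trans order.strict_trans1)
  then show ?thesis using ex_threshold[of "length ps" "\<lambda>q. frame_coord n ps q < t"] that by blast
qed

lemma cyc_frame_threshold_le:
  assumes "cyc_frame n ps"
  obtains k where "k \<le> length ps" "\<And>q. q < length ps \<Longrightarrow> frame_coord n ps q \<le> t \<longleftrightarrow> q < k"
proof -
  have "\<And>i j. i \<le> j \<Longrightarrow> j < length ps \<Longrightarrow> frame_coord n ps j \<le> t \<Longrightarrow> frame_coord n ps i \<le> t"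
    using cyc_frame_le_iff[OF assms] by (meson le_less_trans order.trans)
  then show ?thesis using ex_threshold[of "length ps" "\<lambda>q. frame_coord n ps q \<le> t"] that by blast
qed

lemma cyc_frame_prev_point:
  assumes f: "cyc_frame n ps" and x: "x < n" "x \<notin> set ps"
  obtains i where "i < length ps" "frame_coord n ps i < cdist n (ps!0) x"
    "i + 1 < length ps \<Longrightarrow> cdist n (ps!0) x < frame_coord n ps (i+1)"
proof -
  let ?m = "length ps" and ?D = "frame_coord n ps" and ?t = "cdist n (ps!0) x"
  have m0: "0 < ?m" using f unfolding cyc_frame_def by simp
  obtain k where k: "k \<le> ?m" "\<And>q. q < ?m \<Longrightarrow> ?D q \<le> ?t \<longleftrightarrow> q < k"
    using cyc_frame_threshold_le[OF f] by blast
  have "0 < k" using k(2)[OF m0] by simp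
  define i where "i = k - 1"
  have i: "i < ?m" "?D i \<le> ?t" using i_def k \<open>0 < k\<close> by auto
  have "ps!i \<noteq> x" using x(2) i(1) nth_mem by blast
  then have "?D i < ?t"
    using i(2) cdist_inj[OF cyc_frame_nth_less[OF f m0] cyc_frame_nth_less[OF f i(1)] x(1)] by fastforce
  moreover have "?t < ?D (i+1)" if "i + 1 < ?m" using k(2)[OF that] i_def \<open>0 < k\<close> by simp
  ultimately show ?thesis using that i(1) by blast
qed

lemma cyc_frame_points_in_cint:
  assumes f: "cyc_frame n ps" and v: "v < n" "v' < n"
  obtains s s' where
    "s \<le> length ps" "\<And>q. q < length ps \<Longrightarrow> frame_coord n ps q < cdist n (ps!0) v \<longleftrightarrow> q < s"
    "s' \<le> length ps" "\<And>q. q < length ps \<Longrightarrow> frame_coord n ps q \<le> cdist n (ps!0) v' \<longleftrightarrow> q < s'"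
    "{q. q < length ps \<and> ps!q \<in> cint n v v'} =
       (if cdist n (ps!0) v \<le> cdist n (ps!0) v' then {s..<s'} else {..<s'} \<union> {s..<length ps})"
proof -
  let ?m = "length ps"
  obtain s where s: "s \<le> ?m" "\<And>q. q < ?m \<Longrightarrow> frame_coord n ps q < cdist n (ps!0) v \<longleftrightarrow> q < s"
    using cyc_frame_threshold_less[OF f] by blast
  obtain s' where s': "s' \<le> ?m" "\<And>q. q < ?m \<Longrightarrow> frame_coord n ps q \<le> cdist n (ps!0) v' \<longleftrightarrow> q < s'"
    using cyc_frame_threshold_le[OF f] by blast
  have "ps!q \<in> cint n v v' \<longleftrightarrow>
      (if cdist n (ps!0) v \<le> cdist n (ps!0) v' then s \<le> q \<and> q < s' else s \<le> q \<or> q < s')"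
    if q: "q < ?m" for q
  proof -
    have m0: "0 < ?m" using q by linarith
    show ?thesis
      using mem_cint_iff_rebase[OF cyc_frame_nth_less[OF f m0] v, of "ps!q"] cyc_frame_nth_less[OF f q]
        s(2)[OF q] s'(2)[OF q] by (auto simp: not_less[symmetric])
  qed
  then have "{q. q < ?m \<and> ps!q \<in> cint n v v'} =
       (if cdist n (ps!0) v \<le> cdist n (ps!0) v' then {s..<s'} else {..<s'} \<union> {s..<?m})"
    using s s' by auto
  then show ?thesis using that s s' by blast
qed

lemma cyc_frame_cint_disjoint:
  assumes f: "cyc_frame n ps" and idx: "a \<le> b" "b < c" "c \<le> d" "d < length ps"
  shows "cint n (ps!a) (ps!b) \<inter> cint n (ps!c) (ps!d) = {}"
proof (rule equals0I)
  fix y assume y: "y \<in> cint n (ps!a) (ps!b) \<inter> cint n (ps!c) (ps!d)"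
  have m0: "0 < length ps" using idx by linarith
  have lt: "ps!0 < n" "ps!a < n" "ps!b < n" "ps!c < n" "ps!d < n"
    using cyc_frame_nth_less[OF f] idx m0 by auto
  have D: "frame_coord n ps a \<le> frame_coord n ps b" "frame_coord n ps b < frame_coord n ps c"
    "frame_coord n ps c \<le> frame_coord n ps d"
    using cyc_frame_le_iff[OF f] cyc_frame_less_iff[OF f] idx by auto
  have "cdist n (ps!0) y \<le> frame_coord n ps b"
    using mem_cint_iff_rebase[OF lt(1,2,3), of y] y D(1) by simp
  moreover have "frame_coord n ps c \<le> cdist n (ps!0) y"
    using mem_cint_iff_rebase[OF lt(1,4,5), of y] y D(3) by simp
  ultimately show False using D(2) by simp
qed

lemma cyc_ordered_imp_cyc_frame: "cyc_ordered n L \<Longrightarrow> L \<noteq> [] \<Longrightarrow> cyc_frame n L"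
proof -
  assume c: "cyc_ordered n L" and ne: "L \<noteq> []"
  have lt: "\<And>q. q < length L \<Longrightarrow> L!q < n" using c unfolding cyc_ordered_def verts_def
    by (meson lessThan_iff nth_mem subset_iff)
  have h: "hd L = L!0" using ne by (simp add: hd_conv_nth)
  have "\<And>i j. i < j \<Longrightarrow> j < length L \<Longrightarrow> cdist n (L!0) (L!i) < cdist n (L!0) (L!j)"
  proof -
    fix i j assume ij: "i < j" "j < length L"
    have "(L!i + n - hd L) mod n < (L!j + n - hd L) mod n"
      using c ij unfolding cyc_ordered_def sorted_wrt_iff_nth_less by auto
    then show "cdist n (L!0) (L!i) < cdist n (L!0) (L!j)" using cdist_eq_mod lt ij h ne
      by (metis length_greater_0_conv order.strict_trans)
  qed
  then show ?thesis unfolding cyc_frame_def using ne lt by auto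
qed

lemma cyc_frame_imp_cyc_ordered: "cyc_frame n L \<Longrightarrow> cyc_ordered n L"
proof -
  assume f: "cyc_frame n L"
  have ne: "L \<noteq> []" using f cyc_frame_def by auto
  have lt: "\<And>q. q < length L \<Longrightarrow> L!q < n" using cyc_frame_nth_less[OF f] .
  have h: "hd L = L!0" using ne by (simp add: hd_conv_nth)
  have "distinct L" unfolding distinct_conv_nth using cyc_frame_nth_inj[OF f] by blast
  moreover have "set L \<subseteq> verts n" using lt unfolding verts_def by (auto simp: in_set_conv_nth)
  moreover have "sorted_wrt (<) (map (\<lambda>x. (x + n - hd L) mod n) L)"
    unfolding sorted_wrt_iff_nth_less
  proof (intro allI impI)
    fix i j assume ij: "i < j" "j < length (map (\<lambda>x. (x + n - hd L) mod n) L)"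
    then have ij': "i < length L" "j < length L" by auto
    have "cdist n (L!0) (L!i) < cdist n (L!0) (L!j)" using f ij ij' unfolding cyc_frame_def by auto
    then show "map (\<lambda>x. (x + n - hd L) mod n) L ! i < map (\<lambda>x. (x + n - hd L) mod n) L ! j"
      using cdist_eq_mod lt ij' h ne by simp
  qed
  ultimately show ?thesis unfolding cyc_ordered_def by simp
qed

lemma ex_cyc_frame_of_set:
  assumes P: "finite P" "P \<subseteq> {..<n}" "y \<in> P"
  shows "\<exists>ps. cyc_frame n ps \<and> set ps = P \<and> length ps = card P \<and> ps!0 = y"
proof -
  have y: "y < n" using P by auto
  obtain ts where ts: "sorted_wrt (<) ts" "set ts = cdist n y ` P"
    using ex1_sorted_list_for_set_if_finite[of "cdist n y ` P"] P(1) by auto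
  have dts: "distinct ts" using ts strict_sorted_iff by auto
  have inj: "inj_on (cdist n y) P"
    using cdist_inj y P(2) unfolding inj_on_def by blast
  have lts: "length ts = card P"
    using distinct_card[OF dts] ts(2) card_image[OF inj] by simp
  have tsn: "\<And>q. q < length ts \<Longrightarrow> ts!q < n"
  proof -
    fix q assume "q < length ts"
    then have "ts!q \<in> cdist n y ` P" using ts(2) nth_mem by metis
    then show "ts!q < n" using cdist_less y P(2) by auto
  qed
  have mono: "\<And>i j. i < j \<Longrightarrow> j < length ts \<Longrightarrow> ts!i < ts!j"
    using ts(1) sorted_wrt_iff_nth_less by blast
  have ne: "ts \<noteq> []" using ts(2) P(3) by auto
  have t0: "ts!0 = 0"
  proof (rule ccontr)
    assume a: "ts!0 \<noteq> 0"
    have "0 \<in> set ts" using ts(2) P(3) by force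
    then obtain j where j: "j < length ts" "ts!j = 0" by (metis in_set_conv_nth)
    then have "j \<noteq> 0" using a by metis
    then show False using mono[of 0 j] j by simp
  qed
  define ps where "ps = map (\<lambda>t. (y + t) mod n) ts"
  have lps: "length ps = length ts" using ps_def by simp
  have psq: "\<And>q. q < length ts \<Longrightarrow> cdist n y (ps!q) = ts!q"
    using ps_def cdist_add_mod y tsn by simp
  have p0: "ps!0 = y" using ps_def t0 ne y by simp
  have psn: "\<And>q. q < length ts \<Longrightarrow> ps!q < n" using ps_def y by simp
  have "cyc_frame n ps" unfolding cyc_frame_def
    using ne lps psn p0 psq mono by auto
  moreover have "set ps = P"
  proof -
    have "set ps = (\<lambda>t. (y + t) mod n) ` (cdist n y ` P)" using ps_def ts(2) by simp
    also have "\<dots> = (\<lambda>p. (y + cdist n y p) mod n) ` P" by (simp add: image_image)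
    also have "\<dots> = P"
    proof -
      have "\<And>p. p \<in> P \<Longrightarrow> (y + cdist n y p) mod n = p" using add_cdist_mod y P(2) by auto
      then show ?thesis by simp
    qed
    finally show ?thesis .
  qed
  ultimately show ?thesis using lps lts p0 by auto
qed

section \<open>The cgh of a frame\<close>

text \<open>For the frame of a tuple \<open>C\<close> (see \<open>interleave\<close> below) the frame arcs are the sets
  \<open>[w\<^sub>i, w\<^sub>i\<^sub>-\<^sub>1]\<close> of the paper, and \<open>frame_cgh\<close> is \<open>H\<^sub>n\<^sup>(\<^sup>r\<^sup>)(C)\<close>.\<close>

definition frame_arc :: "nat \<Rightarrow> nat list \<Rightarrow> nat \<Rightarrow> nat \<Rightarrow> nat set" where
  "frame_arc n ps l q = cint n (ps!q) (ps!((q + l) mod length ps))"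

definition frame_cgh :: "nat \<Rightarrow> nat \<Rightarrow> nat list \<Rightarrow> nat \<Rightarrow> nat set set" where
  "frame_cgh n r ps l = {e \<in> rsets n r. \<forall>q<length ps. e \<inter> frame_arc n ps l q \<noteq> {}}"

definition in_cyc_range :: "nat \<Rightarrow> nat \<Rightarrow> nat \<Rightarrow> bool" where
  "in_cyc_range a b t \<longleftrightarrow> (if a \<le> b then a \<le> t \<and> t \<le> b else a \<le> t \<or> t \<le> b)"

lemma mem_frame_arc_iff:
  assumes f: "cyc_frame n ps" and q: "q < length ps"
  shows "x \<in> frame_arc n ps l q \<longleftrightarrow> x < n \<and>
    in_cyc_range (frame_coord n ps q) (frame_coord n ps ((q+l) mod length ps)) (cdist n (ps!0) x)"
proof -
  have m: "0 < length ps" using q by linarith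
  then have "(q+l) mod length ps < length ps" by simp
  then show ?thesis unfolding frame_arc_def in_cyc_range_def
    by (rule mem_cint_iff_rebase[OF cyc_frame_nth_less[OF f m] cyc_frame_nth_less[OF f q]
          cyc_frame_nth_less[OF f]])
qed

lemma frame_arc_disjoint_cint:
  assumes f: "cyc_frame n ps" and q: "q < length ps" and v: "v < n" "v' < n"
    and none: "\<And>t. in_cyc_range (frame_coord n ps q) (frame_coord n ps ((q+l) mod length ps)) t \<Longrightarrow>
      in_cyc_range (cdist n (ps!0) v) (cdist n (ps!0) v') t \<Longrightarrow> False"
  shows "frame_arc n ps l q \<inter> cint n v v' = {}"
proof (rule equals0I)
  fix x assume x: "x \<in> frame_arc n ps l q \<inter> cint n v v'"
  have m0: "0 < length ps" using q by linarith
  have "in_cyc_range (frame_coord n ps q) (frame_coord n ps ((q+l) mod length ps)) (cdist n (ps!0) x)"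
    using x mem_frame_arc_iff[OF f q] by simp
  moreover have "in_cyc_range (cdist n (ps!0) v) (cdist n (ps!0) v') (cdist n (ps!0) x)"
    using x mem_cint_iff_rebase[OF cyc_frame_nth_less[OF f m0] v, of x] unfolding in_cyc_range_def by simp
  ultimately show False by (rule none)
qed

lemma frame_arc_meets_antipodal:
  assumes f: "cyc_frame n ps" and m: "length ps = 2*l+1" and j: "j < length ps" and q: "q < length ps"
  shows "ps!j \<in> frame_arc n ps l q \<or> ps!((j+l) mod length ps) \<in> frame_arc n ps l q"
proof -
  let ?m = "length ps"
  have lm: "l < ?m" using m by simp
  have "cdist ?m q j \<le> l \<or> cdist ?m q ((j+l) mod ?m) \<le> l"
    using add_mod_if[OF j lm] m j q by (simp add: cdist_def split: if_splits; arith)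
  moreover have "cdist ?m q ((q+l) mod ?m) = l" using cdist_add_mod q lm by simp
  ultimately show ?thesis
    unfolding frame_arc_def using cyc_frame_mem_cint_iff[OF f q] j m by simp
qed

lemma ex_frame_arc_disjoint_nowrap:
  assumes f: "cyc_frame n ps" and m: "length ps = 2*l+1" and v: "v < n" "v' < n"
    and c: "card {q. q < length ps \<and> ps!q \<in> cint n v v'} \<le> l"
    and nowrap: "cdist n (ps!0) v \<le> cdist n (ps!0) v'"
  shows "\<exists>q<length ps. frame_arc n ps l q \<inter> cint n v v' = {}"
proof -
  let ?m = "length ps" and ?D = "frame_coord n ps"
  let ?tv = "cdist n (ps!0) v" and ?tv' = "cdist n (ps!0) v'"
  obtain s s' where s: "s \<le> ?m" "\<And>q. q < ?m \<Longrightarrow> ?D q < ?tv \<longleftrightarrow> q < s"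
    and s': "s' \<le> ?m" "\<And>q. q < ?m \<Longrightarrow> ?D q \<le> ?tv' \<longleftrightarrow> q < s'"
    and pts: "{q. q < ?m \<and> ps!q \<in> cint n v v'} =
      (if ?tv \<le> ?tv' then {s..<s'} else {..<s'} \<union> {s..<?m})"
    using cyc_frame_points_in_cint[OF f v] by blast
  have lm: "l < ?m" using m by simp
  have ss: "s \<le> s'"
  proof (rule ccontr)
    assume "\<not> s \<le> s'"
    then have "s' < ?m" "s' < s" using s by auto
    then show False using s(2) s'(2) nowrap by force
  qed
  with nowrap pts c have cnt: "s' - s \<le> l" by simp
  show ?thesis
  proof (cases "s' < ?m")
    case sm: True
    then have far: "?tv' < ?D s'" using s'(2)[OF sm] not_le by blast
    show ?thesis
    proof (cases "s' + l < ?m")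
      case True
      then have "(s' + l) mod ?m = s' + l" "?D s' \<le> ?D (s' + l)"
        using cyc_frame_le_iff[OF f] sm by auto
      then show ?thesis using far nowrap sm
        by (intro exI[of _ s'] conjI frame_arc_disjoint_cint[OF f sm v]) (auto simp: in_cyc_range_def)
    next
      case False
      have wrap: "(s' + l) mod ?m = s' + l - ?m" using add_mod_if[OF sm lm] False by simp
      have "s' + l - ?m < s" using cnt m False ss by linarith
      then have "?D (s' + l - ?m) < ?tv" "?D (s' + l - ?m) < ?D s'"
        using s cyc_frame_less_iff[OF f] sm ss by auto
      then show ?thesis using wrap far nowrap sm
        by (intro exI[of _ s'] conjI frame_arc_disjoint_cint[OF f sm v]) (auto simp: in_cyc_range_def)
    qed
  next
    case False
    then have "l < s" using cnt s' m by linarith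
    then have "?D l < ?tv" using s lm by auto
    then show ?thesis using lm nowrap
      by (intro exI[of _ 0] conjI frame_arc_disjoint_cint[OF f _ v]) (auto simp: in_cyc_range_def)
  qed
qed

lemma ex_frame_arc_disjoint_wrap:
  assumes f: "cyc_frame n ps" and m: "length ps = 2*l+1" and v: "v < n" "v' < n"
    and c: "card {q. q < length ps \<and> ps!q \<in> cint n v v'} \<le> l"
    and wrap: "\<not> cdist n (ps!0) v \<le> cdist n (ps!0) v'"
  shows "\<exists>q<length ps. frame_arc n ps l q \<inter> cint n v v' = {}"
proof -
  let ?m = "length ps" and ?D = "frame_coord n ps"
  let ?tv = "cdist n (ps!0) v" and ?tv' = "cdist n (ps!0) v'"
  obtain s s' where s: "s \<le> ?m" "\<And>q. q < ?m \<Longrightarrow> ?D q < ?tv \<longleftrightarrow> q < s"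
    and s': "s' \<le> ?m" "\<And>q. q < ?m \<Longrightarrow> ?D q \<le> ?tv' \<longleftrightarrow> q < s'"
    and pts: "{q. q < ?m \<and> ps!q \<in> cint n v v'} =
      (if ?tv \<le> ?tv' then {s..<s'} else {..<s'} \<union> {s..<?m})"
    using cyc_frame_points_in_cint[OF f v] by blast
  have ss: "s' \<le> s"
  proof (rule ccontr)
    assume "\<not> s' \<le> s"
    then have "s < ?m" "s < s'" using s' by auto
    then show False using s(2) s'(2) wrap by force
  qed
  then have "card ({..<s'} \<union> {s..<?m}) = s' + (?m - s)" by (subst card_Un_disjoint) auto
  with wrap pts c have "s' + (?m - s) \<le> l" by simp
  then have "s' + l < s" using m s by linarith
  then have s'm: "s' < ?m" "s' + l < ?m" using s by auto
  then have "?tv' < ?D s'" "?D (s' + l) < ?tv"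
    using s(2)[OF s'm(2)] s'(2)[OF s'm(1)] \<open>s' + l < s\<close> not_le by auto
  moreover have "?D s' \<le> ?D (s' + l)" using cyc_frame_le_iff[OF f] s'm by simp
  ultimately show ?thesis using wrap s'm
    by (intro exI[of _ s'] conjI frame_arc_disjoint_cint[OF f s'm(1) v]) (auto simp: in_cyc_range_def)
qed

text \<open>If an arc \<open>A\<close> contains at most \<open>l\<close> of the \<open>2 l + 1\<close> frame points, some frame arc misses \<open>A\<close>:
  take the frame arc starting at the first frame point after \<open>A\<close>.\<close>

lemma ex_frame_arc_disjoint:
  assumes f: "cyc_frame n ps" and m: "length ps = 2*l+1" and v: "v < n" "v' < n"
    and c: "card {q. q < length ps \<and> ps!q \<in> cint n v v'} \<le> l"
  shows "\<exists>q<length ps. frame_arc n ps l q \<inter> cint n v v' = {}"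
  using ex_frame_arc_disjoint_nowrap[OF assms] ex_frame_arc_disjoint_wrap[OF assms] by blast

lemma many_frame_points_in_cint:
  assumes f: "cyc_frame n ps" and m: "length ps = 2*l+1" and v: "v < n" "v' < n"
    and h: "h \<in> frame_cgh n r ps l" "h \<subseteq> cint n v v'"
  shows "l < card {q. q < length ps \<and> ps!q \<in> cint n v v'}"
proof (rule ccontr)
  assume "\<not> l < card {q. q < length ps \<and> ps!q \<in> cint n v v'}"
  then obtain q where "q < length ps" "frame_arc n ps l q \<inter> cint n v v' = {}"
    using ex_frame_arc_disjoint[OF f m v] by auto
  then show False using h unfolding frame_cgh_def by blast
qed

lemma frame_cgh_M1_free:
  assumes f: "cyc_frame n ps" and m: "length ps = 2*l+1" and r: "2 \<le> r"
  shows "\<not> contains_M1 n (frame_cgh n r ps l)"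
proof
  let ?m = "length ps" and ?G = "frame_cgh n r ps l"
  let ?pts = "\<lambda>A. {q. q < ?m \<and> ps!q \<in> A}"
  assume "contains_M1 n ?G"
  then obtain h1 h2 u u' where h: "h1 \<in> ?G" "h2 \<in> ?G" "u < n" "u' < n"
     "h1 \<subseteq> cint n u u'" "h2 \<inter> cint n u u' = {}"
    unfolding contains_M1_def verts_def by blast
  have "h2 \<subseteq> verts n" "h2 \<noteq> {}" using h(2) r unfolding frame_cgh_def rsets_def by auto
  then obtain w w' where w: "w < n" "w' < n" "h2 \<subseteq> cint n w w'" "cint n w w' \<inter> cint n u u' = {}"
    using ex_cint_cover_of_outside[OF h(3,4) _ _ h(6)] by blast
  have "l < card (?pts (cint n u u'))" using many_frame_points_in_cint[OF f m h(3,4) h(1,5)] .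
  moreover have "l < card (?pts (cint n w w'))" using many_frame_points_in_cint[OF f m w(1,2) h(2) w(3)] .
  moreover have "?pts (cint n u u') \<union> ?pts (cint n w w') \<subseteq> {..<?m}" by auto
  then have "card (?pts (cint n u u') \<union> ?pts (cint n w w')) \<le> ?m"
    by (metis card_lessThan card_mono finite_lessThan)
  moreover have "card (?pts (cint n u u') \<union> ?pts (cint n w w')) =
      card (?pts (cint n u u')) + card (?pts (cint n w w'))"
    using w(4) by (intro card_Un_disjoint) auto
  ultimately show False using m by linarith
qed

lemma frame_cgh_M1_saturated:
  assumes f: "cyc_frame n ps" and m: "length ps = 2*l+1" and l: "1 \<le> l" and r: "2 \<le> r"
    and big: "\<forall>q<length ps. r \<le> card (frame_arc n ps l q)"
  shows "M1_saturated n r (frame_cgh n r ps l)"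
  unfolding M1_saturated_def
proof (intro conjI ballI)
  let ?m = "length ps"
  show "frame_cgh n r ps l \<subseteq> rsets n r" unfolding frame_cgh_def by auto
  show "\<not> contains_M1 n (frame_cgh n r ps l)" using frame_cgh_M1_free[OF f m r] .
  fix e assume e: "e \<in> rsets n r - frame_cgh n r ps l"
  then obtain q where q: "q < ?m" "e \<inter> frame_arc n ps l q = {}" unfolding frame_cgh_def by auto
  define q' where "q' = (q + l) mod ?m"
  have q'm: "q' < ?m" using q'_def m by simp
  have "cdist ?m q q' = l" using q'_def cdist_add_mod q m by simp
  then have "q' \<noteq> q" using l by auto
  then have neq: "ps!q \<noteq> ps!q'" using cyc_frame_nth_inj[OF f q(1) q'm] by auto
  have lt: "ps!q < n" "ps!q' < n" using cyc_frame_nth_less[OF f] q q'm by auto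
  obtain E where E: "E \<subseteq> frame_arc n ps l q" "card E = r" "ps!q \<in> E" "ps!q' \<in> E"
    using ex_rset_in_cint[OF lt neq r] big q unfolding frame_arc_def q'_def by auto
  have "0 < n" using lt by simp
  then have "E \<subseteq> verts n" using E(1) cint_subset_verts unfolding frame_arc_def by blast
  moreover have "E \<inter> frame_arc n ps l p \<noteq> {}" if "p < ?m" for p
    using frame_arc_meets_antipodal[OF f m q(1) that] E q'_def by auto
  ultimately have "E \<in> frame_cgh n r ps l" using E(2) by (simp add: frame_cgh_def rsets_def)
  then show "contains_M1 n (insert e (frame_cgh n r ps l))"
    unfolding contains_M1_def using E(1) q(2) lt neq verts_def unfolding frame_arc_def q'_def
    by (intro bexI[of _ E] bexI[of _ e] bexI[of _ "ps!q"] bexI[of _ "ps!((q + l) mod ?m)"]) auto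
qed

section \<open>Tuples and frames\<close>

text \<open>\<open>interleave C\<close> lists \<open>w\<^sub>1, w\<^sub>3, \<dots>, w\<^sub>2\<^sub>l\<^sub>+\<^sub>1, w\<^sub>2, \<dots>, w\<^sub>2\<^sub>l\<close>, the clockwise order required by
  semi-validity; the entry \<open>C ! k\<close> (that is, \<open>w\<^sub>k\<^sub>+\<^sub>1\<close>) sits at position \<open>ilv_index l k\<close>, and
  passing to the predecessor in \<open>C\<close> is a shift by \<open>l\<close> positions in the frame.\<close>

definition interleave :: "nat list \<Rightarrow> nat list" where
  "interleave C = map (\<lambda>j. C ! (2*j)) [0..<(length C + 1) div 2] @ map (\<lambda>j. C ! (2*j+1)) [0..<length C div 2]"

definition ilv_index :: "nat \<Rightarrow> nat \<Rightarrow> nat" where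
  "ilv_index l k = (if even k then k div 2 else l + (k+1) div 2)"

lemma length_interleave: "length C = 2*l+1 \<Longrightarrow> length (interleave C) = 2*l+1"
  unfolding interleave_def by simp

lemma nth_interleave:
  assumes "length C = 2*l+1" "k < 2*l+1"
  shows "interleave C ! (ilv_index l k) = C ! k"
proof (cases "even k")
  case True
  then obtain j where j: "k = 2*j" by auto
  then have "j < l + 1" using assms by simp
  then consider "j < l" | "j = l" by linarith
  then show ?thesis using j assms unfolding interleave_def ilv_index_def by cases (auto simp add: nth_append)
next
  case False
  then obtain j where j: "k = 2*j+1" by (metis oddE)
  then have "j < l" using assms by simp
  moreover have "(2*j+1+1) div 2 = j + 1" by simp
  ultimately show ?thesis using j assms unfolding interleave_def ilv_index_def by (simp add: nth_append)
qed

lemma ilv_index_less: "k < 2*l+1 \<Longrightarrow> ilv_index l k < 2*l+1"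
  unfolding ilv_index_def by (auto elim!: oddE)

lemma ilv_index_surj: "q < 2*l+1 \<Longrightarrow> \<exists>k<2*l+1. ilv_index l k = q"
proof (cases "q \<le> l")
  case True
  assume "q < 2*l+1"
  then show ?thesis using True unfolding ilv_index_def by (intro exI[of _ "2*q"]) auto
next
  case False
  assume "q < 2*l+1"
  then have "ilv_index l (2*(q-l-1)+1) = q" using False unfolding ilv_index_def by simp
  then show ?thesis using False \<open>q < 2*l+1\<close> by (intro exI[of _ "2*(q-l-1)+1"]) auto
qed

lemma ilv_index_pred: "i < 2*l+1 \<Longrightarrow> ilv_index l ((i + (2*l+1) - 1) mod (2*l+1)) = (ilv_index l i + l) mod (2*l+1)"
proof (cases "i = 0")
  case True
  then show ?thesis unfolding ilv_index_def by simp
next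
  case False
  assume i: "i < 2*l+1"
  then have md: "(i + (2*l+1) - 1) mod (2*l+1) = i - 1" using False
    by (metis Nat.add_diff_assoc2 add.commute add_diff_cancel_left' less_imp_diff_less mod_add_self2
        mod_less not_gr_zero less_one linorder_not_le)
  show ?thesis
  proof (cases "even i")
    case True
    then obtain j where j: "i = 2*j" by auto
    then have "j \<ge> 1" "j \<le> l" using False i by auto
    moreover have "odd (2*j - 1)" using \<open>j \<ge> 1\<close> by simp
    moreover have "(2*j - 1 + 1) div 2 = j" using \<open>j \<ge> 1\<close> by simp
    ultimately show ?thesis using md j unfolding ilv_index_def by simp
  next
    case F2: False
    then obtain j where j: "i = 2*j+1" by (metis oddE)
    then have "j < l" using i by simp
    have "(l + (2*j+1+1) div 2 + l) mod (2*l+1) = j"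
    proof -
      have e: "l + (2*j+1+1) div 2 + l = j + (2*l+1)" by simp
      have "(l + (2*j+1+1) div 2 + l) mod (2*l+1) = (j + (2*l+1)) mod (2*l+1)" by (simp only: e)
      also have "\<dots> = j mod (2*l+1)" by (rule mod_add_self2)
      also have "\<dots> = j" using \<open>j < l\<close> by simp
      finally show ?thesis .
    qed
    then show ?thesis using md j unfolding ilv_index_def by simp
  qed
qed

lemma semi_valid_iff_interleave: "semi_valid n C \<longleftrightarrow> odd (length C) \<and> cyc_ordered n (interleave C)"
  unfolding semi_valid_def interleave_def by simp

lemma cint_pred_eq_frame_arc:
  assumes "length C = 2*l+1" "i < 2*l+1"
  shows "cint n (C ! i) (C ! ((i + length C - 1) mod length C)) = frame_arc n (interleave C) l (ilv_index l i)"
proof -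
  have p: "(i + (2*l+1) - 1) mod (2*l+1) < 2*l+1" by simp
  show ?thesis unfolding frame_arc_def using nth_interleave[OF assms(1) assms(2)] nth_interleave[OF assms(1) p]
    ilv_index_pred[OF assms(2)] length_interleave[OF assms(1)] assms(1) by simp
qed

lemma all_cint_pred_iff_all_frame_arc:
  assumes "length C = 2*l+1"
  shows "(\<forall>i<length C. P (cint n (C ! i) (C ! ((i + length C - 1) mod length C)))) \<longleftrightarrow>
    (\<forall>q<2*l+1. P (frame_arc n (interleave C) l q))"
proof
  assume a: "\<forall>i<length C. P (cint n (C ! i) (C ! ((i + length C - 1) mod length C)))"
  show "\<forall>q<2*l+1. P (frame_arc n (interleave C) l q)"
  proof (intro allI impI)
    fix q assume "q < 2*l+1"
    then obtain k where k: "k < 2*l+1" "ilv_index l k = q" using ilv_index_surj by blast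
    then show "P (frame_arc n (interleave C) l q)" using a cint_pred_eq_frame_arc[OF assms k(1)] assms by auto
  qed
next
  assume "\<forall>q<2*l+1. P (frame_arc n (interleave C) l q)"
  then show "\<forall>i<length C. P (cint n (C ! i) (C ! ((i + length C - 1) mod length C)))"
    using cint_pred_eq_frame_arc[OF assms] ilv_index_less assms by auto
qed

lemma Hc_eq_frame_cgh:
  assumes "length C = 2*l+1"
  shows "Hc n r C = frame_cgh n r (interleave C) l"
  unfolding Hc_def frame_cgh_def
  using all_cint_pred_iff_all_frame_arc[OF assms, of "\<lambda>A. _ \<inter> A \<noteq> {}"] length_interleave[OF assms]
  by simp

lemma r_valid_iff_frame_arc:
  assumes "length C = 2*l+1"
  shows "r_valid n r C \<longleftrightarrow> semi_valid n C \<and> (\<forall>q<2*l+1. r \<le> card (frame_arc n (interleave C) l q))"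
  unfolding r_valid_def using all_cint_pred_iff_all_frame_arc[OF assms, of "\<lambda>A. r \<le> card A"] by simp

lemma Hc_M1_saturated:
  assumes r: "2 \<le> r" and C: "length C = 2*l+1" and l: "1 \<le> l" and v: "r_valid n r C"
  shows "M1_saturated n r (Hc n r C)"
proof -
  have sv: "semi_valid n C" and big: "\<forall>q<2*l+1. r \<le> card (frame_arc n (interleave C) l q)"
    using r_valid_iff_frame_arc[OF C] v by auto
  have "interleave C \<noteq> []" using length_interleave[OF C] by auto
  then have f: "cyc_frame n (interleave C)" using cyc_ordered_imp_cyc_frame sv semi_valid_iff_interleave by blast
  show ?thesis using frame_cgh_M1_saturated[OF f length_interleave[OF C] l r] big length_interleave[OF C] Hc_eq_frame_cgh[OF C] by simp
qed

lemma ex_tuple_interleave: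
  assumes f: "cyc_frame n ps" and m: "length ps = 2*l+1"
  shows "\<exists>C. length C = 2*l+1 \<and> semi_valid n C \<and> interleave C = ps"
proof -
  define C where "C = map (\<lambda>k. ps ! (ilv_index l k)) [0..<2*l+1]"
  have lC: "length C = 2*l+1" using C_def by simp
  have "interleave C = ps"
  proof (rule nth_equalityI)
    show "length (interleave C) = length ps" using length_interleave[OF lC] m by simp
    fix q assume "q < length (interleave C)"
    then obtain k where k: "k < 2*l+1" "ilv_index l k = q" using ilv_index_surj length_interleave[OF lC] by auto
    have Ck: "C ! k = ps ! (ilv_index l k)" unfolding C_def using k(1) by (simp del: upt_Suc)
    then show "interleave C ! q = ps ! q" using nth_interleave[OF lC k(1)] k(2) by simp
  qed
  moreover have "semi_valid n C" using semi_valid_iff_interleave cyc_frame_imp_cyc_ordered[OF f] calculation lC by simp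
  ultimately show ?thesis using lC by blast
qed

section \<open>Saturated cghs\<close>

lemma contains_M1_mono: "contains_M1 n H \<Longrightarrow> H \<subseteq> H' \<Longrightarrow> contains_M1 n H'"
  unfolding contains_M1_def by blast

lemma M1_saturated_nonempty:
  assumes "M1_saturated n r H" "2 \<le> r" "r \<le> n"
  shows "H \<noteq> {}"
proof
  assume "H = {}"
  moreover have "{..<r} \<in> rsets n r" unfolding rsets_def verts_def using assms by auto
  ultimately have "contains_M1 n {{..<r}}" using assms(1) unfolding M1_saturated_def by auto
  then have "{..<r} = {}" unfolding contains_M1_def by blast
  moreover have "0 \<in> {..<r}" using assms(2) by simp
  ultimately show False by blast
qed

lemma ex_nonempty_invariant_subset:
  assumes S: "finite S" "S \<noteq> {}" "f ` S \<subseteq> S"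
  shows "\<exists>P. P \<noteq> {} \<and> P \<subseteq> S \<and> f ` P = P"
proof -
  define T where "T k = (f ^^ k) ` S" for k
  have T_Suc: "T (Suc k) = f ` T k" for k by (simp add: T_def image_comp)
  have dec: "T (Suc k) \<subseteq> T k" for k
  proof (induction k)
    case 0
    then show ?case using S(3) T_def by simp
  next
    case (Suc k)
    have "T (Suc (Suc k)) = f ` T (Suc k)" by (rule T_Suc)
    also have "\<dots> \<subseteq> f ` T k" using Suc by (rule image_mono)
    finally show ?case by (simp only: T_Suc)
  qed
  have sub: "T k \<subseteq> S" for k
  proof (induction k)
    case 0
    then show ?case by (simp add: T_def)
  next
    case (Suc k)
    then show ?case using dec[of k] by blast
  qed
  have fin: "finite (T k)" for k using S(1) T_def by simp
  have ne: "T k \<noteq> {}" for k using S(2) T_def by simp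
  have "\<exists>k. T (Suc k) = T k"
  proof (rule ccontr)
    assume no_fix: "\<nexists>k. T (Suc k) = T k"
    have shrink: "card (T (Suc k)) < card (T k)" for k
    proof (rule psubset_card_mono[OF fin])
      show "T (Suc k) \<subset> T k" using dec[of k] no_fix by auto
    qed
    have "card (T k) + k \<le> card S" for k
    proof (induction k)
      case 0
      then show ?case by (simp add: T_def)
    next
      case (Suc k)
      then show ?case using shrink[of k] by linarith
    qed
    from this[of "card S"] have "card (T (card S)) = 0" by simp
    then show False using fin ne by simp
  qed
  then obtain k where "T (Suc k) = T k" ..
  then show ?thesis using T_Suc[of k] sub[of k] ne[of k] by (intro exI[of _ "T k"]) simp
qed

lemma cyclic_nondecreasing_const:
  fixes c :: "nat \<Rightarrow> nat"
  assumes step: "\<And>i. i < m \<Longrightarrow> c i \<le> c ((i+1) mod m)" and k: "k < m"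
  shows "c k = c 0"
proof -
  have chain: "c j \<le> c (j + d)" if "j + d < m" for j d
    using that
  proof (induction d)
    case (Suc d)
    then have "c j \<le> c (j + d)" by simp
    also have "\<dots> \<le> c ((j + d + 1) mod m)" using step[of "j+d"] Suc by simp
    also have "(j + d + 1) mod m = j + Suc d" using Suc by simp
    finally show ?case .
  qed simp
  have "c 0 \<le> c k" using chain[of 0 k] k by simp
  moreover have "c k \<le> c (m - 1)" using chain[of k "m - 1 - k"] k by simp
  moreover have "c (m - 1) \<le> c 0" using step[of "m - 1"] k by simp
  ultimately show ?thesis by simp
qed

locale saturated =
  fixes n r :: nat and H :: "nat set set"
  assumes r2: "2 \<le> r" and nr: "2*r \<le> n" and sat: "M1_saturated n r H"
begin

lemma n_pos: "0 < n" using r2 nr by simp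

lemma H_subset: "H \<subseteq> rsets n r" using sat M1_saturated_def by auto

lemma H_M1_free: "\<not> contains_M1 n H" using sat M1_saturated_def by auto

lemma H_nonempty: "H \<noteq> {}" using M1_saturated_nonempty sat r2 nr by simp

lemma edge_card: "h \<in> H \<Longrightarrow> card h = r \<and> h \<subseteq> verts n" using H_subset rsets_def by auto

definition arc_len :: "nat \<Rightarrow> nat" where
  "arc_len x = (LEAST k. \<exists>h\<in>H. h \<subseteq> cint n x ((x + k) mod n))"

definition arc_end :: "nat \<Rightarrow> nat" where
  "arc_end x = (x + arc_len x) mod n"

lemma ex_edge_in_full_arc:
  assumes x: "x < n"
  shows "\<exists>h\<in>H. h \<subseteq> cint n x ((x + (n-1)) mod n)"
proof -
  obtain h where h: "h \<in> H" using H_nonempty by auto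
  have d: "cdist n x ((x + (n-1)) mod n) = n - 1" using cdist_add_mod[OF x, of "n-1"] n_pos by simp
  have "verts n \<subseteq> cint n x ((x + (n-1)) mod n)"
  proof
    fix y assume "y \<in> verts n"
    then have y: "y < n" by (simp add: verts_def)
    have "cdist n x y \<le> n - 1" using cdist_less[OF x y] by simp
    then show "y \<in> cint n x ((x + (n-1)) mod n)" using mem_cint_iff x y d n_pos by simp
  qed
  moreover have "h \<subseteq> verts n" using edge_card h by simp
  ultimately show ?thesis using h by blast
qed

lemma edge_in_min_arc: "x < n \<Longrightarrow> \<exists>h\<in>H. h \<subseteq> cint n x (arc_end x)"
  unfolding arc_end_def arc_len_def
  by (rule LeastI[of "\<lambda>k. \<exists>h\<in>H. h \<subseteq> cint n x ((x+k) mod n)" "n-1"], rule ex_edge_in_full_arc)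

lemma arc_len_le: "x < n \<Longrightarrow> arc_len x \<le> n - 1"
  unfolding arc_len_def
  by (rule Least_le[of "\<lambda>k. \<exists>h\<in>H. h \<subseteq> cint n x ((x+k) mod n)" "n-1"], rule ex_edge_in_full_arc)

lemma no_edge_in_shorter_arc: "k < arc_len x \<Longrightarrow> \<not> (\<exists>h\<in>H. h \<subseteq> cint n x ((x + k) mod n))"
  unfolding arc_len_def using not_less_Least by blast

lemma arc_end_less: "arc_end x < n"
  unfolding arc_end_def using n_pos by simp

lemma cdist_arc_end: "x < n \<Longrightarrow> cdist n x (arc_end x) = arc_len x"
  unfolding arc_end_def using cdist_add_mod arc_len_le n_pos
  by (metis diff_less less_numeral_extra(1) order_le_less_trans)

lemma card_le_cint:
  assumes "v < n" "w < n" "h \<in> H" "h \<subseteq> cint n v w"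
  shows "r \<le> cdist n v w + 1"
  using card_mono[OF finite_cint assms(4)] card_cint assms edge_card by simp

lemma arc_len_pos: "x < n \<Longrightarrow> 1 \<le> arc_len x"
proof (rule ccontr)
  assume x: "x < n" and "\<not> 1 \<le> arc_len x"
  then have "cdist n x (arc_end x) = 0" using cdist_arc_end by simp
  moreover obtain h where "h \<in> H" "h \<subseteq> cint n x (arc_end x)" using edge_in_min_arc x by blast
  ultimately show False using card_le_cint[OF x arc_end_less] r2 by fastforce
qed

lemma arc_end_neq: "x < n \<Longrightarrow> arc_end x \<noteq> x"
  using cdist_arc_end arc_len_pos by fastforce

lemma arc_len_le_cdist:
  assumes v: "v < n" and w: "w < n" and h: "h \<in> H" "h \<subseteq> cint n v w"
  shows "arc_len v \<le> cdist n v w"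
proof (rule ccontr)
  assume "\<not> arc_len v \<le> cdist n v w"
  then have "\<not> (\<exists>h\<in>H. h \<subseteq> cint n v ((v + cdist n v w) mod n))" using no_edge_in_shorter_arc by simp
  then show False using h add_cdist_mod[OF v w] by simp
qed

lemma min_arc_subset:
  assumes v: "v < n" and w: "w < n" and h: "h \<in> H" "h \<subseteq> cint n v w"
  shows "cint n v (arc_end v) \<subseteq> cint n v w"
proof
  fix y assume "y \<in> cint n v (arc_end v)"
  then have "y < n" "cdist n v y \<le> cdist n v (arc_end v)" using mem_cint_iff[OF v arc_end_less] by auto
  then show "y \<in> cint n v w" using arc_len_le_cdist[OF assms] cdist_arc_end[OF v] mem_cint_iff[OF v w] by simp
qed

text \<open>If \<open>[x, arc_end x]\<close> ended strictly inside \<open>[x, arc_end p]\<close>, then \<open>[p, arc_end x]\<close> would be a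
  shorter arc from \<open>p\<close> than \<open>[p, arc_end p]\<close> containing an edge.\<close>

lemma arc_end_mono:
  assumes p: "p < n" and x: "x \<in> cint n p (arc_end p)"
  shows "cdist n x (arc_end p) \<le> cdist n x (arc_end x)"
proof (rule ccontr)
  assume neg: "\<not> cdist n x (arc_end p) \<le> cdist n x (arc_end x)"
  have xn: "x < n" using x mem_cint_iff p arc_end_less by auto
  define a where "a = cdist n p x"
  define E where "E = cdist n p (arc_end p)"
  define c where "c = cdist n p (arc_end x)"
  have aE: "a \<le> E" using x mem_cint_iff p arc_end_less a_def E_def by auto
  have En: "E < n" "c < n" "a < n" using cdist_less p arc_end_less xn E_def c_def a_def by auto
  have dp: "cdist n x (arc_end p) = cdist n a E" using cdist_rebase[OF p xn arc_end_less[of p]] a_def E_def by simp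
  have dx: "cdist n x (arc_end x) = cdist n a c" using cdist_rebase[OF p xn arc_end_less[of x]] a_def c_def by simp
  have "cdist n a c < cdist n a E" using neg dp dx by simp
  then have ac: "a \<le> c" "c < E" using aE En unfolding cdist_def by (auto split: if_splits)
  have sub: "cint n x (arc_end x) \<subseteq> cint n p (arc_end x)"
  proof
    fix y assume y: "y \<in> cint n x (arc_end x)"
    then have yn: "y < n" using mem_cint_iff xn arc_end_less by auto
    have "a \<le> cdist n p y \<and> cdist n p y \<le> c" using y mem_cint_iff_rebase[OF p xn arc_end_less, of y] ac a_def c_def by simp
    then show "y \<in> cint n p (arc_end x)" using mem_cint_iff_rebase[OF p p arc_end_less, of y] yn c_def by simp
  qed
  obtain h where h: "h \<in> H" "h \<subseteq> cint n x (arc_end x)" using edge_in_min_arc xn by blast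
  have "arc_len p \<le> c" using arc_len_le_cdist[OF p arc_end_less h(1)] h(2) sub c_def by blast
  then show False using ac cdist_arc_end[OF p] E_def by simp
qed

lemma no_disjoint_edge_arcs:
  assumes h: "h1 \<in> H" "h2 \<in> H" and uv: "u < n" "u' < n" "v < n" "v' < n" "u \<noteq> u'"
    and s: "h1 \<subseteq> cint n u u'" "h2 \<subseteq> cint n v v'" and d: "cint n u u' \<inter> cint n v v' = {}"
  shows False
proof -
  have "h2 \<inter> cint n u u' = {}" using s d by blast
  moreover have "u \<in> verts n" "u' \<in> verts n" using uv verts_def by auto
  ultimately have "contains_M1 n H" unfolding contains_M1_def using h uv(5) s(1) by blast
  then show False using H_M1_free by simp
qed

lemma edge_meets_min_arc:
  assumes h: "h \<in> H" and x: "x < n"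
  shows "h \<inter> cint n x (arc_end x) \<noteq> {}"
proof
  assume "h \<inter> cint n x (arc_end x) = {}"
  moreover obtain h' where "h' \<in> H" "h' \<subseteq> cint n x (arc_end x)" using edge_in_min_arc[OF x] by blast
  moreover have "x \<in> verts n" "arc_end x \<in> verts n" using x arc_end_less verts_def by auto
  ultimately have "contains_M1 n H"
    using h arc_end_neq[OF x] unfolding contains_M1_def by metis
  then show False using H_M1_free by simp
qed

lemma mem_if_meets_min_arcs:
  assumes E: "E \<in> rsets n r" and hit: "\<forall>x<n. E \<inter> cint n x (arc_end x) \<noteq> {}"
  shows "E \<in> H"
proof (rule ccontr)
  have meets: "E \<inter> cint n v w \<noteq> {}" if "h \<in> H" "v < n" "w < n" "h \<subseteq> cint n v w" for h v w
    using min_arc_subset[OF that(2,3,1,4)] hit that(2) by blast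
  have Ev: "E \<subseteq> verts n" "E \<noteq> {}" using E r2 unfolding rsets_def by auto
  assume "E \<notin> H"
  then have "contains_M1 n (insert E H)" using sat E unfolding M1_saturated_def by blast
  then obtain h1 h2 u u' where h: "h1 \<in> insert E H" "h2 \<in> insert E H" "u < n" "u' < n" "u \<noteq> u'"
     "h1 \<subseteq> cint n u u'" "h2 \<inter> cint n u u' = {}"
    unfolding contains_M1_def verts_def by blast
  consider "h1 = E" "h2 = E" | "h1 = E" "h2 \<in> H" | "h1 \<in> H" "h2 = E" | "h1 \<in> H" "h2 \<in> H"
    using h(1,2) by blast
  then show False
  proof cases
    case 1
    then show False using h(6,7) Ev(2) by blast
  next
    case 2
    have "h2 \<subseteq> verts n" "h2 \<noteq> {}" using edge_card[OF 2(2)] r2 by auto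
    then obtain w w' where w: "w < n" "w' < n" "h2 \<subseteq> cint n w w'" "cint n w w' \<inter> cint n u u' = {}"
      using ex_cint_cover_of_outside[OF h(3,4) _ _ h(7)] by blast
    then show False using meets[OF 2(2) w(1-3)] h(6) 2(1) by blast
  next
    case 3
    then show False using meets[OF 3(1) h(3,4,6)] h(7) by blast
  next
    case 4
    then have "contains_M1 n H" unfolding contains_M1_def verts_def using h by blast
    then show False using H_M1_free by simp
  qed
qed

lemma ex_arc_end_invariant: "\<exists>P. P \<noteq> {} \<and> P \<subseteq> {..<n} \<and> arc_end ` P = P"
  using ex_nonempty_invariant_subset[of "{..<n}" arc_end] n_pos arc_end_less by auto

text \<open>On a frame that \<open>arc_end\<close> permutes, the number of frame positions by which \<open>arc_end\<close> moves a
  point can only grow from one point to the next, by monotonicity of \<open>arc_end\<close>.\<close>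

lemma arc_end_displacement_mono:
  assumes f: "cyc_frame n ps" and m2: "2 \<le> length ps"
    and \<sigma>: "\<And>i. i < length ps \<Longrightarrow> \<sigma> i < length ps \<and> ps!(\<sigma> i) = arc_end (ps!i)"
    and inj: "inj_on \<sigma> {..<length ps}" and i: "i < length ps"
  shows "cdist (length ps) i (\<sigma> i) \<le> cdist (length ps) ((i+1) mod length ps) (\<sigma> ((i+1) mod length ps))"
proof -
  let ?m = "length ps"
  define i' where "i' = (i+1) mod ?m"
  have "0 < ?m" using i by linarith
  then have i'm: "i' < ?m" unfolding i'_def by simp
  have si: "\<sigma> i < ?m" and si'm: "\<sigma> i' < ?m" using \<sigma> i i'm by auto
  have psn: "\<And>q. q < ?m \<Longrightarrow> ps!q < n" using cyc_frame_nth_less[OF f] by simp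
  have sneq: "\<sigma> i \<noteq> i"
  proof
    assume "\<sigma> i = i"
    then show False using \<sigma>[OF i] arc_end_neq[OF psn[OF i]] by simp
  qed
  have d1: "cdist ?m i i' = 1" using cdist_add_mod[OF i, of 1] m2 i'_def by simp
  also have "\<dots> \<le> cdist ?m i (\<sigma> i)" using sneq cdist_eq_0_iff[OF i si] by simp
  finally have "ps!i' \<in> cint n (ps!i) (arc_end (ps!i))"
    using cyc_frame_mem_cint_iff[OF f i i'm si] \<sigma>[OF i] by simp
  then have "cdist n (ps!i') (arc_end (ps!i)) \<le> cdist n (ps!i') (arc_end (ps!i'))"
    by (rule arc_end_mono[OF psn[OF i]])
  then have "cdist n (ps!i') (ps!(\<sigma> i)) \<le> cdist n (ps!i') (ps!(\<sigma> i'))"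
    using \<sigma>[OF i] \<sigma>[OF i'm] by simp
  then have le: "cdist ?m i' (\<sigma> i) \<le> cdist ?m i' (\<sigma> i')"
    using cyc_frame_cdist_le_iff[OF f i'm si si'm] by simp
  have "i' \<noteq> i" using i'_def d1 by auto
  then have "\<sigma> i' \<noteq> \<sigma> i" using inj i i'm unfolding inj_on_def by blast
  then have "cdist ?m i' (\<sigma> i') \<noteq> cdist ?m i' (\<sigma> i)" using cdist_inj[OF i'm si'm si] by blast
  moreover have "cdist ?m i' (\<sigma> i) = cdist ?m i (\<sigma> i) - 1"
    using cdist_Suc_mod[OF i si sneq] i'_def by simp
  moreover have "1 \<le> cdist ?m i (\<sigma> i)" using sneq cdist_eq_0_iff[OF i si] by simp
  ultimately show ?thesis using le i'_def by simp
qed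

lemma ex_frame_arc_end_shift:
  "\<exists>ps c. cyc_frame n ps \<and> 2 \<le> length ps \<and> 1 \<le> c \<and> c < length ps \<and>
     (\<forall>i<length ps. arc_end (ps!i) = ps!((i + c) mod length ps))"
proof -
  obtain P where P: "P \<noteq> {}" "P \<subseteq> {..<n}" "arc_end ` P = P" using ex_arc_end_invariant by blast
  have finP: "finite P" using P(2) finite_subset by blast
  obtain y where y: "y \<in> P" using P(1) by blast
  obtain ps where f: "cyc_frame n ps" and ps: "set ps = P" "length ps = card P" "ps!0 = y"
    using ex_cyc_frame_of_set[OF finP P(2) y] by blast
  let ?m = "length ps"
  have "arc_end y \<in> P" using y P(3) by blast
  moreover have "arc_end y \<noteq> y" using y P(2) arc_end_neq by blast
  ultimately have "card {y, arc_end y} \<le> card P" using y by (intro card_mono[OF finP]) auto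
  then have m2: "2 \<le> ?m" using \<open>arc_end y \<noteq> y\<close> ps(2) by simp
  have "\<exists>j<?m. ps!j = arc_end (ps!i)" if "i < ?m" for i
  proof -
    have "arc_end (ps!i) \<in> arc_end ` set ps" using that by simp
    then have "arc_end (ps!i) \<in> set ps" using P(3) ps(1) by simp
    then show ?thesis by (simp add: in_set_conv_nth)
  qed
  then obtain \<sigma> where \<sigma>: "\<And>i. i < ?m \<Longrightarrow> \<sigma> i < ?m \<and> ps!(\<sigma> i) = arc_end (ps!i)" by metis
  have injP: "inj_on arc_end (set ps)" using eq_card_imp_inj_on[OF finP, of arc_end] P(3) ps(1) by simp
  have inj: "inj_on \<sigma> {..<?m}"
  proof (rule inj_onI)
    fix i j assume ij: "i \<in> {..<?m}" "j \<in> {..<?m}" "\<sigma> i = \<sigma> j"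
    then have "arc_end (ps!i) = arc_end (ps!j)" using \<sigma>[of i] \<sigma>[of j] by simp
    then have "ps!i = ps!j" using injP ij unfolding inj_on_def by simp
    then show "i = j" using cyc_frame_nth_inj[OF f] ij by simp
  qed
  define c where "c i = cdist ?m i (\<sigma> i)" for i
  have "c i \<le> c ((i+1) mod ?m)" if "i < ?m" for i
    unfolding c_def by (rule arc_end_displacement_mono[OF f m2 \<sigma> inj that])
  then have const: "c k = c 0" if "k < ?m" for k
    by (rule cyclic_nondecreasing_const[OF _ that])
  have jump: "arc_end (ps!i) = ps!((i + c 0) mod ?m)" if i: "i < ?m" for i
    using add_cdist_mod[OF i, of "\<sigma> i"] \<sigma>[OF i] const[OF i] c_def by simp
  have m0: "0 < ?m" using m2 by linarith
  have "\<sigma> 0 \<noteq> 0"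
  proof
    assume "\<sigma> 0 = 0"
    then show False using \<sigma>[OF m0] arc_end_neq[OF cyc_frame_nth_less[OF f m0]] by simp
  qed
  then have "c 0 \<noteq> 0" using c_def cdist_eq_0_iff[OF m0] \<sigma>[OF m0] by simp
  moreover have "c 0 < ?m" using c_def cdist_less[OF m0] \<sigma>[OF m0] by simp
  ultimately have "1 \<le> c 0" "c 0 < ?m" by auto
  then show ?thesis using f m2 jump by blast
qed

definition shifts_by :: "nat list \<Rightarrow> nat \<Rightarrow> bool" where
  "shifts_by ps c \<longleftrightarrow> cyc_frame n ps \<and> 1 \<le> c \<and> c < length ps \<and>
     (\<forall>i<length ps. arc_end (ps!i) = ps!((i + c) mod length ps))"

lemma ex_shifts_by: "\<exists>ps c. shifts_by ps c"
  using ex_frame_arc_end_shift unfolding shifts_by_def by blast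

lemma shifts_by_rotate:
  assumes s: "shifts_by ps c" and j: "j < length ps"
  shows "shifts_by (rotate j ps) c"
proof -
  let ?m = "length ps"
  have f: "cyc_frame n ps" and jump: "\<And>i. i < ?m \<Longrightarrow> arc_end (ps!i) = ps!((i + c) mod ?m)"
    using s unfolding shifts_by_def by auto
  have nth: "rotate j ps ! q = ps ! ((q + j) mod ?m)" if "q < ?m" for q
    using cyc_frame_rotate(2)[OF f j that] .
  have "arc_end (rotate j ps ! i) = rotate j ps ! ((i + c) mod ?m)" if i: "i < ?m" for i
  proof -
    have "0 < ?m" using j by linarith
    then have "(i + j) mod ?m < ?m" "(i + c) mod ?m < ?m" by simp_all
    moreover have "((i + j) mod ?m + c) mod ?m = ((i + c) mod ?m + j) mod ?m"
      by (simp add: mod_simps add.commute add.left_commute)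
    ultimately show ?thesis using nth i jump by simp
  qed
  then show ?thesis using s cyc_frame_rotate(1)[OF f j] unfolding shifts_by_def by simp
qed

text \<open>A shift by \<open>c\<close> with at least \<open>2 c + 2\<close> frame points would put edges into the two disjoint
  arcs \<open>[p\<^sub>0, p\<^sub>c]\<close> and \<open>[p\<^sub>c\<^sub>+\<^sub>1, p\<^sub>2\<^sub>c\<^sub>+\<^sub>1]\<close>.\<close>

lemma shifts_by_not_small:
  assumes s: "shifts_by ps c"
  shows "length ps \<le> 2*c + 1"
proof (rule ccontr)
  let ?m = "length ps"
  assume "\<not> ?m \<le> 2*c + 1"
  then have idx: "c < ?m" "c + 1 < ?m" "2*c + 1 < ?m" by auto
  have f: "cyc_frame n ps" and c: "1 \<le> c"
    and jump: "\<And>i. i < ?m \<Longrightarrow> arc_end (ps!i) = ps!((i + c) mod ?m)"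
    using s unfolding shifts_by_def by auto
  have m0: "0 < ?m" using idx by linarith
  have "(c + 1 + c) mod ?m = 2*c + 1" using idx by simp
  then have j: "arc_end (ps!0) = ps!c" "arc_end (ps!(c+1)) = ps!(2*c+1)"
    using jump[OF m0] jump[OF idx(2)] idx by (auto simp: mult_2)
  have lt: "ps!0 < n" "ps!c < n" "ps!(c+1) < n" "ps!(2*c+1) < n"
    using cyc_frame_nth_less[OF f] idx m0 by auto
  obtain h1 where h1: "h1 \<in> H" "h1 \<subseteq> cint n (ps!0) (ps!c)"
    using edge_in_min_arc[OF lt(1)] j by auto
  obtain h2 where h2: "h2 \<in> H" "h2 \<subseteq> cint n (ps!(c+1)) (ps!(2*c+1))"
    using edge_in_min_arc[OF lt(3)] j by auto
  have neq: "ps!0 \<noteq> ps!c" using cyc_frame_nth_inj[OF f m0 idx(1)] c by auto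
  have "cint n (ps!0) (ps!c) \<inter> cint n (ps!(c+1)) (ps!(2*c+1)) = {}"
    using cyc_frame_cint_disjoint[OF f _ _ _ idx(3)] by simp
  then show False by (rule no_disjoint_edge_arcs[OF h1(1) h2(1) lt neq h1(2) h2(2)])
qed

text \<open>For a shift by \<open>c\<close> with at most \<open>2 c\<close> frame points, let \<open>z\<close> be the vertex just before \<open>p\<^sub>c\<close>.
  Every minimal arc contains \<open>p\<^sub>0\<close> or \<open>z\<close>, so by saturation \<open>H\<close> has an edge inside \<open>[p\<^sub>0, z]\<close>,
  which is shorter than the minimal arc \<open>[p\<^sub>0, p\<^sub>c]\<close>.\<close>

lemma shifts_by_large_cover_frame_point:
  assumes s: "shifts_by ps c" and bg: "length ps \<le> 2*c"
    and z: "z < n" "cdist n (ps!0) z = frame_coord n ps c - 1" and i: "i < length ps"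
  shows "ps!0 \<in> cint n (ps!i) (arc_end (ps!i)) \<or> z \<in> cint n (ps!i) (arc_end (ps!i))"
proof -
  let ?m = "length ps" and ?D = "frame_coord n ps"
  have f: "cyc_frame n ps" and c: "1 \<le> c" "c < ?m"
    and jump: "\<And>i. i < ?m \<Longrightarrow> arc_end (ps!i) = ps!((i + c) mod ?m)"
    using s unfolding shifts_by_def by auto
  have m0: "0 < ?m" using i by linarith
  have psn: "\<And>q. q < ?m \<Longrightarrow> ps!q < n" using cyc_frame_nth_less[OF f] by simp
  define j where "j = (i + c) mod ?m"
  have jm: "j < ?m" and ex: "arc_end (ps!i) = ps!j" using j_def m0 jump[OF i] by auto
  show ?thesis
  proof (cases "i = 0 \<or> ?m - i \<le> c")
    case True
    have "cdist ?m i j = c" using cdist_add_mod[OF i c(2)] j_def by simp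
    then have "cdist ?m i 0 \<le> cdist ?m i j" using True i unfolding cdist_def by auto
    then show ?thesis using cyc_frame_mem_cint_iff[OF f i m0 jm] ex by simp
  next
    case False
    then have ic: "i + c < ?m" "i < c" using bg by auto
    then have "j = i + c" using j_def by simp
    moreover have "?D i \<le> ?D (i+c)" "?D i < ?D c" "?D c \<le> ?D (i+c)"
      using cyc_frame_le_iff[OF f] cyc_frame_less_iff[OF f] ic c by auto
    ultimately have "z \<in> cint n (ps!i) (ps!j)"
      using mem_cint_iff_rebase[OF psn[OF m0] psn[OF i] psn[OF jm], of z] z by auto
    then show ?thesis using ex by simp
  qed
qed

lemma shifts_by_large_cover_other_point:
  assumes s: "shifts_by ps c" and bg: "length ps \<le> 2*c"
    and z: "z < n" "cdist n (ps!0) z = frame_coord n ps c - 1" and x: "x < n" "x \<notin> set ps"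
  shows "ps!0 \<in> cint n x (arc_end x) \<or> z \<in> cint n x (arc_end x)"
proof -
  let ?m = "length ps" and ?D = "frame_coord n ps"
  have f: "cyc_frame n ps" and c: "1 \<le> c" "c < ?m"
    and jump: "\<And>i. i < ?m \<Longrightarrow> arc_end (ps!i) = ps!((i + c) mod ?m)"
    using s unfolding shifts_by_def by auto
  have m0: "0 < ?m" using c by linarith
  have psn: "\<And>q. q < ?m \<Longrightarrow> ps!q < n" using cyc_frame_nth_less[OF f] by simp
  define t where "t = cdist n (ps!0) x"
  obtain i where i: "i < ?m" and Dit: "?D i < t" and tnext: "i + 1 < ?m \<Longrightarrow> t < ?D (i+1)"
    using cyc_frame_prev_point[OF f x] unfolding t_def by blast
  define j where "j = (i + c) mod ?m"
  have jm: "j < ?m" and ex: "arc_end (ps!i) = ps!j" using j_def m0 jump[OF i] by auto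
  have xin: "x \<in> cint n (ps!i) (arc_end (ps!i))"
  proof (cases "i + c < ?m")
    case True
    then have "j = i + c" "t < ?D (i+1)" "?D (i+1) \<le> ?D (i+c)" "?D i \<le> ?D (i+c)"
      using j_def tnext cyc_frame_le_iff[OF f] c by auto
    then show ?thesis using mem_cint_iff_rebase[OF psn[OF m0] psn[OF i] psn[OF jm], of x] x(1) Dit
      t_def ex by auto
  next
    case False
    then have "j = i + c - ?m" using j_def add_mod_if[OF i c(2)] by simp
    then have "?D j < ?D i" using cyc_frame_less_iff[OF f jm i] c False by linarith
    then show ?thesis using mem_cint_iff_rebase[OF psn[OF m0] psn[OF i] psn[OF jm], of x] x(1) Dit
      t_def ex by auto
  qed
  have "cdist n x (ps!j) \<le> cdist n x (arc_end x)" using arc_end_mono[OF psn[OF i] xin] ex by simp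
  then have sub: "cint n x (ps!j) \<subseteq> cint n x (arc_end x)"
    using mem_cint_iff[OF x(1) psn[OF jm]] mem_cint_iff[OF x(1) arc_end_less] by auto
  show ?thesis
  proof (cases "i + c < ?m")
    case True
    then have "j = i + c" "t < ?D (i+1)" "?D (i+1) \<le> ?D c" "?D c \<le> ?D (i+c)"
      using j_def tnext cyc_frame_le_iff[OF f] c bg by auto
    then have "z \<in> cint n x (ps!j)"
      using mem_cint_iff_rebase[OF psn[OF m0] x(1) psn[OF jm], of z] z t_def by auto
    then show ?thesis using sub by blast
  next
    case False
    then have "j = i + c - ?m" using j_def add_mod_if[OF i c(2)] by simp
    then have "?D j < ?D i" using cyc_frame_less_iff[OF f jm i] c False by linarith
    then have "ps!0 \<in> cint n x (ps!j)"
      using mem_cint_iff_rebase[OF psn[OF m0] x(1) psn[OF jm], of "ps!0"] psn[OF m0] Dit t_def by simp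
    then show ?thesis using sub by blast
  qed
qed

lemma shifts_by_not_large_aux:
  assumes s: "shifts_by ps c" and bg: "length ps \<le> 2*c" and rD: "r \<le> frame_coord n ps c"
  shows False
proof -
  let ?m = "length ps" and ?D = "frame_coord n ps"
  have f: "cyc_frame n ps" and c: "1 \<le> c" "c < ?m"
    and jump: "\<And>i. i < ?m \<Longrightarrow> arc_end (ps!i) = ps!((i + c) mod ?m)"
    using s unfolding shifts_by_def by auto
  have m0: "0 < ?m" using c by linarith
  have p0n: "ps!0 < n" using cyc_frame_nth_less[OF f m0] .
  have Dn: "?D c < n" using cdist_less p0n cyc_frame_nth_less[OF f c(2)] by simp
  define z where "z = (ps!0 + (?D c - 1)) mod n"
  have zn: "z < n" using z_def n_pos by simp
  have dz: "cdist n (ps!0) z = ?D c - 1" using cdist_add_mod[OF p0n, of "?D c - 1"] Dn z_def by simp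
  have neq: "ps!0 \<noteq> z" using dz rD r2 by auto
  have "r \<le> card (cint n (ps!0) z)" using card_cint[OF p0n zn] dz rD by simp
  then obtain E where E: "E \<subseteq> cint n (ps!0) z" "card E = r" "ps!0 \<in> E" "z \<in> E"
    using ex_rset_in_cint[OF p0n zn neq r2] by blast
  have "E \<in> rsets n r" using E cint_subset_verts[OF n_pos] unfolding rsets_def by blast
  moreover have "E \<inter> cint n x (arc_end x) \<noteq> {}" if x: "x < n" for x
  proof (cases "x \<in> set ps")
    case True
    then obtain i where "i < ?m" "x = ps!i" by (metis in_set_conv_nth)
    then show ?thesis using shifts_by_large_cover_frame_point[OF s bg zn dz] E by blast
  next
    case False
    then show ?thesis using shifts_by_large_cover_other_point[OF s bg zn dz x] E by blast
  qed
  ultimately have "E \<in> H" using mem_if_meets_min_arcs by blast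
  then have "arc_len (ps!0) \<le> cdist n (ps!0) z" using arc_len_le_cdist[OF p0n zn _ E(1)] by blast
  moreover have "arc_len (ps!0) = ?D c" using cdist_arc_end[OF p0n] jump[OF m0] c by simp
  ultimately show False using dz rD r2 by simp
qed

text \<open>If \<open>[p\<^sub>0, p\<^sub>c]\<close> has fewer than \<open>r\<close> vertices, the complementary arc \<open>[p\<^sub>c, p\<^sub>2\<^sub>c]\<close> has at least
  \<open>n - r \<ge> r\<close> of them, so the previous lemma applies after rotating the frame by \<open>c\<close>.\<close>

lemma shifts_by_not_large:
  assumes s: "shifts_by ps c"
  shows "2*c + 1 \<le> length ps"
proof (rule ccontr)
  let ?m = "length ps" and ?D = "frame_coord n ps"
  assume "\<not> 2*c + 1 \<le> ?m"
  then have bg: "?m \<le> 2*c" by simp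
  show False
  proof (cases "r \<le> ?D c")
    case True
    then show False using shifts_by_not_large_aux[OF s bg] by simp
  next
    case False
    have f: "cyc_frame n ps" and c: "1 \<le> c" "c < ?m" using s unfolding shifts_by_def by auto
    define ps' where "ps' = rotate c ps"
    have s': "shifts_by ps' c" using shifts_by_rotate[OF s c(2)] ps'_def by simp
    have nth: "ps'!q = ps!((q + c) mod ?m)" if "q < ?m" for q
      using cyc_frame_rotate(2)[OF f c(2) that] ps'_def by simp
    define j where "j = 2*c - ?m"
    have "(c + c) mod ?m = j" using j_def add_mod_if[OF c(2) c(2)] bg c(2) by simp
    moreover have m0: "0 < ?m" using c by linarith
    ultimately have e: "ps'!0 = ps!c" "ps'!c = ps!j" using nth[of 0] nth[of c] c by auto
    have jc: "j < c" "j < ?m" using j_def c by linarith+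
    then have "?D j < ?D c" using cyc_frame_less_iff[OF f] c by simp
    moreover have "?D c < n"
      using cdist_less[OF cyc_frame_nth_less[OF f m0] cyc_frame_nth_less[OF f c(2)]] .
    moreover have "cdist n (ps!c) (ps!j) = cdist n (?D c) (?D j)"
      using cyc_frame_cdist_rebase[OF f c(2) jc(2)] .
    ultimately have "cdist n (ps!c) (ps!j) = ?D j + n - ?D c" unfolding cdist_def by simp
    then have "r \<le> frame_coord n ps' c" using e False nr by simp
    then show False using shifts_by_not_large_aux[OF s'] bg ps'_def by simp
  qed
qed

lemma ex_shifts_by_half: "\<exists>ps l. shifts_by ps l \<and> length ps = 2*l + 1"
  using ex_shifts_by shifts_by_not_small shifts_by_not_large by (meson le_antisym)

lemma shifts_by_frame_arc:
  "shifts_by ps l \<Longrightarrow> q < length ps \<Longrightarrow> frame_arc n ps l q = cint n (ps!q) (arc_end (ps!q))"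
  unfolding shifts_by_def frame_arc_def by simp

lemma shifts_by_r_le_card_frame_arc:
  assumes s: "shifts_by ps l" and q: "q < length ps"
  shows "r \<le> card (frame_arc n ps l q)"
proof -
  have "ps!q < n" using s q cyc_frame_nth_less unfolding shifts_by_def by blast
  then obtain h where "h \<in> H" "h \<subseteq> frame_arc n ps l q"
    using edge_in_min_arc[OF \<open>ps!q < n\<close>] shifts_by_frame_arc[OF s q] by auto
  then show ?thesis using card_mono[OF finite_cint] edge_card unfolding frame_arc_def by metis
qed

lemma shifts_by_eq_frame_cgh:
  assumes s: "shifts_by ps l" and m: "length ps = 2*l + 1"
  shows "H = frame_cgh n r ps l"
proof
  have f: "cyc_frame n ps" using s unfolding shifts_by_def by simp
  show H_sub: "H \<subseteq> frame_cgh n r ps l"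
  proof
    fix h assume h: "h \<in> H"
    have "h \<inter> frame_arc n ps l q \<noteq> {}" if q: "q < length ps" for q
      using edge_meets_min_arc[OF h cyc_frame_nth_less[OF f q]] shifts_by_frame_arc[OF s q] by simp
    then show "h \<in> frame_cgh n r ps l" using h H_subset unfolding frame_cgh_def by blast
  qed
  show "frame_cgh n r ps l \<subseteq> H"
  proof
    fix e assume e: "e \<in> frame_cgh n r ps l"
    show "e \<in> H"
    proof (rule ccontr)
      assume "e \<notin> H"
      then have "contains_M1 n (insert e H)" using sat e unfolding M1_saturated_def frame_cgh_def by blast
      moreover have "insert e H \<subseteq> frame_cgh n r ps l" using e H_sub by blast
      ultimately have "contains_M1 n (frame_cgh n r ps l)" by (rule contains_M1_mono)
      then show False using frame_cgh_M1_free[OF f m r2] by simp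
    qed
  qed
qed

lemma ex_r_valid_tuple: "\<exists>l\<ge>1. \<exists>C. length C = 2*l + 1 \<and> r_valid n r C \<and> H = Hc n r C"
proof -
  obtain ps l where s: "shifts_by ps l" and m: "length ps = 2*l + 1"
    using ex_shifts_by_half by blast
  have f: "cyc_frame n ps" and l: "1 \<le> l" using s unfolding shifts_by_def by auto
  obtain C where C: "length C = 2*l + 1" "semi_valid n C" "interleave C = ps"
    using ex_tuple_interleave[OF f m] by blast
  have "r_valid n r C"
    using r_valid_iff_frame_arc[OF C(1)] C(2,3) shifts_by_r_le_card_frame_arc[OF s] m by simp
  moreover have "H = Hc n r C" using shifts_by_eq_frame_cgh[OF s m] Hc_eq_frame_cgh[OF C(1)] C(3) by simp
  ultimately show ?thesis using C(1) l by blast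
qed

end

theorem theorem3p2:
  fixes n r :: nat and H :: "nat set set"
  assumes "r \<ge> 2" and "n \<ge> 2 * r" and "H \<subseteq> rsets n r"
  shows "M1_saturated n r H \<longleftrightarrow>
    (\<exists>l\<ge>1. \<exists>C. length C = 2 * l + 1 \<and> r_valid n r C \<and> H = Hc n r C)"
proof
  assume "M1_saturated n r H"
  then interpret saturated n r H using assms by unfold_locales auto
  show "\<exists>l\<ge>1. \<exists>C. length C = 2 * l + 1 \<and> r_valid n r C \<and> H = Hc n r C"
    by (rule ex_r_valid_tuple)
next
  assume "\<exists>l\<ge>1. \<exists>C. length C = 2 * l + 1 \<and> r_valid n r C \<and> H = Hc n r C"
  then obtain l C where "1 \<le> l" "length C = 2 * l + 1" "r_valid n r C" "H = Hc n r C" by blast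
  then show "M1_saturated n r H" using Hc_M1_saturated[OF assms(1)] by simp
qed

end
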